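(* Let $M'=\langle A,\Sigma\rangle$ be a countable structure and let $\mathcal{F}$ be the set of all (everywhere defined) functions $f\colon\mathbb{N}\to A$. Let $\varphi\colon\mathcal{F}\to\mathcal{F}$ be a partial mapping with countable domain which almost preserves every relation definable in $\langle A,\Sigma\rangle$. Then for every $a\in\mathcal{F}$ with $a\notin \mathrm{Dom}(\varphi)$ there exists $b\in\mathcal{F}$ such that the mapping $\varphi\cup\{\langle a,b\rangle\}$ (extending $\varphi$ by $a\mapsto b$) almost preserves every relation definable in $\langle A,\Sigma\rangle$.
   Context: The signature $\Sigma$ contains the equality symbol $=$. A relation on $A$ is definable in $\langle A,\Sigma\rangle$ if it is defined in $M'$ by a first-order formula in the signature $\Sigma$ (without parameters). For an $n$-ary relation $P$ on $A$ and a partial mapping $\psi\colon\mathcal{F}\to\mathcal{F}$, we say $\psi$ almost preserves $P$ if for all $f_1,\dots,f_n\in\mathrm{Dom}(\psi)$ the set $\{i\in\mathbb{N} : P(f_1(i),\dots,f_n(i))\not\leftrightarrow P(\psi(f_1)(i),\dots,\psi(f_n)(i))\}$ is finite. *)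

theory Defs
  imports Main "HOL-Library.Countable" "HOL-Library.Countable_Set"
begin

datatype 'f trm = Var nat | Fn 'f "'f trm list"

datatype ('f, 'r) fm =
    Eq "'f trm" "'f trm"
  | Rel 'r "'f trm list"
  | Neg "('f, 'r) fm"
  | Conj "('f, 'r) fm" "('f, 'r) fm"
  | Ex nat "('f, 'r) fm"

text \<open>A structure: universe is the whole type 'a; the signature gives arities.\<close>
record ('a, 'f, 'r) struct =
  fun_ar :: "'f \<Rightarrow> nat"
  rel_ar :: "'r \<Rightarrow> nat"
  fun_int :: "'f \<Rightarrow> 'a list \<Rightarrow> 'a"
  rel_int :: "'r \<Rightarrow> 'a list \<Rightarrow> bool"

fun wf_trm :: "('a, 'f, 'r) struct \<Rightarrow> 'f trm \<Rightarrow> bool" where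
  "wf_trm M (Var x) = True"
| "wf_trm M (Fn f ts) = (length ts = fun_ar M f \<and> (\<forall>t\<in>set ts. wf_trm M t))"

fun wf_fm :: "('a, 'f, 'r) struct \<Rightarrow> ('f, 'r) fm \<Rightarrow> bool" where
  "wf_fm M (Eq s t) = (wf_trm M s \<and> wf_trm M t)"
| "wf_fm M (Rel r ts) = (length ts = rel_ar M r \<and> (\<forall>t\<in>set ts. wf_trm M t))"
| "wf_fm M (Neg p) = wf_fm M p"
| "wf_fm M (Conj p q) = (wf_fm M p \<and> wf_fm M q)"
| "wf_fm M (Ex x p) = wf_fm M p"

fun fv_trm :: "'f trm \<Rightarrow> nat set" where
  "fv_trm (Var x) = {x}"
| "fv_trm (Fn f ts) = (\<Union>t\<in>set ts. fv_trm t)"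

fun fv_fm :: "('f, 'r) fm \<Rightarrow> nat set" where
  "fv_fm (Eq s t) = fv_trm s \<union> fv_trm t"
| "fv_fm (Rel r ts) = (\<Union>t\<in>set ts. fv_trm t)"
| "fv_fm (Neg p) = fv_fm p"
| "fv_fm (Conj p q) = fv_fm p \<union> fv_fm q"
| "fv_fm (Ex x p) = fv_fm p - {x}"

fun eval_trm :: "('a, 'f, 'r) struct \<Rightarrow> (nat \<Rightarrow> 'a) \<Rightarrow> 'f trm \<Rightarrow> 'a" where
  "eval_trm M e (Var x) = e x"
| "eval_trm M e (Fn f ts) = fun_int M f (map (eval_trm M e) ts)"

fun sat :: "('a, 'f, 'r) struct \<Rightarrow> (nat \<Rightarrow> 'a) \<Rightarrow> ('f, 'r) fm \<Rightarrow> bool" where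
  "sat M e (Eq s t) = (eval_trm M e s = eval_trm M e t)"
| "sat M e (Rel r ts) = rel_int M r (map (eval_trm M e) ts)"
| "sat M e (Neg p) = (\<not> sat M e p)"
| "sat M e (Conj p q) = (sat M e p \<and> sat M e q)"
| "sat M e (Ex x p) = (\<exists>v. sat M (e(x := v)) p)"

text \<open>An n-ary relation on 'a is represented by its characteristic predicate on lists
(only lists of length n matter).\<close>
definition definable :: "('a, 'f, 'r) struct \<Rightarrow> nat \<Rightarrow> ('a list \<Rightarrow> bool) \<Rightarrow> bool" where
  "definable M n P \<longleftrightarrow> (\<exists>\<phi>. wf_fm M \<phi> \<and> fv_fm \<phi> \<subseteq> {..<n} \<and>
     (\<forall>xs. length xs = n \<longrightarrow> (P xs \<longleftrightarrow> sat M (\<lambda>i. if i < n then xs ! i else undefined) \<phi>)))"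

definition almost_preserves ::
  "nat \<Rightarrow> ('a list \<Rightarrow> bool) \<Rightarrow> ((nat \<Rightarrow> 'a) \<rightharpoonup> (nat \<Rightarrow> 'a)) \<Rightarrow> bool" where
  "almost_preserves n P \<psi> \<longleftrightarrow> (\<forall>fs. length fs = n \<and> set fs \<subseteq> dom \<psi> \<longrightarrow>
     finite {i::nat. P (map (\<lambda>f. f i) fs) \<noteq> P (map (\<lambda>f. the (\<psi> f) i) fs)})"

end

theory Submission
  imports Defs
begin

text \<open>Enumerate \<open>dom \<phi>\<close> as \<open>g 0, g 1, \<dots>\<close> and evaluate formulas coordinatewise, sending variable
  \<open>0\<close> to \<open>a i\<close> (resp. a candidate value \<open>y\<close>) and variable \<open>Suc t\<close> to \<open>g t i\<close> (resp. \<open>\<phi> (g t) i\<close>).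
  For finitely many formulas, the existence of a \<open>y\<close> with the same sign pattern as \<open>a i\<close> is
  again a formula, so almost preservation by \<open>\<phi>\<close> provides such a \<open>y\<close> at almost every
  coordinate. Enumerating all formulas and letting \<open>b i\<close> match the first \<open>k\<close> of them for the
  largest feasible \<open>k \<le> i\<close>, every formula is respected at almost all coordinates; after renaming
  variables, every definable relation on tuples from \<open>dom (\<phi>(a \<mapsto> b))\<close> is such a formula.\<close>

instance trm :: (countable) countable by countable_datatype
instance fm :: (countable, countable) countable by countable_datatype

lemma finite_fv_trm: "finite (fv_trm t)"
  by (induction t) auto

lemma finite_fv_fm: "finite (fv_fm p)"
  by (induction p) (auto simp: finite_fv_trm)

lemma eval_trm_cong: "\<forall>x\<in>fv_trm t. e x = e' x \<Longrightarrow> eval_trm M e t = eval_trm M e' t"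
  by (induction t) (auto cong: map_cong)

lemma sat_cong: "\<forall>x\<in>fv_fm p. e x = e' x \<Longrightarrow> sat M e p = sat M e' p"
proof (induction p arbitrary: e e')
  case (Rel r ts)
  then have "map (eval_trm M e) ts = map (eval_trm M e') ts"
    by (auto intro!: eval_trm_cong)
  then show ?case by (simp only: sat.simps)
next
  case (Eq s t)
  then show ?case
    using eval_trm_cong[of s e e' M] eval_trm_cong[of t e e' M] by auto
next
  case (Conj p q)
  then have "sat M e p = sat M e' p" "sat M e q = sat M e' q"
    by (intro Conj.IH; auto)+
  then show ?case by simp
next
  case (Ex x p)
  then have "sat M (e(x := v)) p = sat M (e'(x := v)) p" for v
    by (intro Ex.IH) auto
  then show ?case by simp
qed auto

fun ren_trm :: "(nat \<Rightarrow> nat) \<Rightarrow> 'f trm \<Rightarrow> 'f trm" where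
  "ren_trm \<sigma> (Var x) = Var (\<sigma> x)"
| "ren_trm \<sigma> (Fn f ts) = Fn f (map (ren_trm \<sigma>) ts)"

lemma eval_ren_trm: "eval_trm M e (ren_trm \<sigma> t) = eval_trm M (\<lambda>x. e (\<sigma> x)) t"
  by (induction t) (auto cong: map_cong)

lemma wf_ren_trm: "wf_trm M (ren_trm \<sigma> t) = wf_trm M t"
  by (induction t) auto

text \<open>Quantified variables are renamed to a variable outside the image of the free ones,
  so no capture occurs.\<close>
lemma rename_fm: "wf_fm M p \<Longrightarrow> \<exists>q. wf_fm M q \<and> (\<forall>e. sat M e q = sat M (\<lambda>x. e (\<sigma> x)) p)"
proof (induction p arbitrary: \<sigma>)
  case (Eq s t)
  show ?case
    using Eq by (intro exI[of _ "Eq (ren_trm \<sigma> s) (ren_trm \<sigma> t)"]) (simp add: eval_ren_trm wf_ren_trm comp_def)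
next
  case (Rel r ts)
  show ?case
    using Rel by (intro exI[of _ "Rel r (map (ren_trm \<sigma>) ts)"]) (simp add: eval_ren_trm wf_ren_trm comp_def)
next
  case (Neg p)
  then obtain q where "wf_fm M q" "\<forall>e. sat M e q = sat M (\<lambda>x. e (\<sigma> x)) p"
    by auto
  then show ?case by (intro exI[of _ "Neg q"]) simp
next
  case (Conj p1 p2)
  then obtain q1 q2 where "wf_fm M q1" "\<forall>e. sat M e q1 = sat M (\<lambda>x. e (\<sigma> x)) p1"
    and "wf_fm M q2" "\<forall>e. sat M e q2 = sat M (\<lambda>x. e (\<sigma> x)) p2"
    by (metis wf_fm.simps(4))
  then show ?case by (intro exI[of _ "Conj q1 q2"]) simp
next
  case (Ex x p)
  obtain z where z: "z \<notin> \<sigma> ` fv_fm p"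
    using ex_new_if_finite[OF infinite_UNIV_nat] finite_fv_fm by blast
  obtain q where q: "wf_fm M q" "\<forall>e. sat M e q = sat M (\<lambda>w. e ((\<sigma>(x := z)) w)) p"
    using Ex.IH[of "\<sigma>(x := z)"] Ex.prems by auto
  have "sat M (\<lambda>w. (e(z := v)) ((\<sigma>(x := z)) w)) p = sat M ((\<lambda>w. e (\<sigma> w))(x := v)) p" for e v
    using z by (intro sat_cong) auto
  then show ?case
    using q by (intro exI[of _ "Ex z q"]) simp
qed

lemma definable_renamed:
  assumes "definable M n P"
  obtains \<theta> where "wf_fm M \<theta>" "\<And>e. sat M e \<theta> = P (map (\<lambda>x. e (\<sigma> x)) [0..<n])"
proof -
  obtain \<theta> where \<theta>: "wf_fm M \<theta>" "fv_fm \<theta> \<subseteq> {..<n}"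
    "\<And>xs. length xs = n \<Longrightarrow> P xs = sat M (\<lambda>i. if i < n then xs ! i else undefined) \<theta>"
    using assms unfolding definable_def by blast
  obtain \<theta>' where \<theta>': "wf_fm M \<theta>'" "\<And>e. sat M e \<theta>' = sat M (\<lambda>x. e (\<sigma> x)) \<theta>"
    using rename_fm[OF \<theta>(1)] by blast
  have "sat M (\<lambda>x. e (\<sigma> x)) \<theta> = P (map (\<lambda>x. e (\<sigma> x)) [0..<n])" for e
    using \<theta>(2) by (subst \<theta>(3)) (auto intro!: sat_cong)
  with \<theta>' show ?thesis by (intro that) auto
qed

fun conj_list :: "('f, 'r) fm list \<Rightarrow> ('f, 'r) fm" where
  "conj_list [] = Eq (Var 0) (Var 0)"
| "conj_list (p # ps) = Conj p (conj_list ps)"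

lemma wf_conj_list: "wf_fm M (conj_list ps) \<longleftrightarrow> (\<forall>p\<in>set ps. wf_fm M p)"
  by (induction ps) auto

lemma sat_conj_list_signs:
  "sat M e (conj_list (map (\<lambda>\<theta>. if \<theta> \<in> S then \<theta> else Neg \<theta>) \<theta>s)) \<longleftrightarrow> (\<forall>\<theta>\<in>set \<theta>s. sat M e \<theta> \<longleftrightarrow> \<theta> \<in> S)"
  by (induction \<theta>s) auto

lemma fun_upd_zero_eq_case_nat: "h(0 := y) = case_nat y (\<lambda>t. h (Suc t))"
  by (rule ext) (simp split: nat.split)

lemma almost_preserves_sat:
  assumes pres: "\<forall>n P. definable M n P \<longrightarrow> almost_preserves n P \<phi>"
    and g: "range g \<subseteq> dom \<phi>" and "wf_fm M \<psi>"
  shows "finite {i. sat M (\<lambda>v. g v i) \<psi> \<noteq> sat M (\<lambda>v. the (\<phi> (g v)) i) \<psi>}"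
proof -
  obtain N where N: "fv_fm \<psi> \<subseteq> {..<N}"
    using finite_fv_fm finite_nat_iff_bounded by blast
  define P where "P xs = sat M (\<lambda>l. if l < N then xs ! l else undefined) \<psi>" for xs
  have "definable M N P"
    unfolding definable_def P_def using \<open>wf_fm M \<psi>\<close> N by blast
  with pres have "almost_preserves N P \<phi>"
    by blast
  define fs where "fs = map g [0..<N]"
  have "finite {i. P (map (\<lambda>f. f i) fs) \<noteq> P (map (\<lambda>f. the (\<phi> f) i) fs)}"
    using \<open>almost_preserves N P \<phi>\<close> g unfolding almost_preserves_def
    by (elim allE[of _ fs]) (auto simp: fs_def)
  moreover have "P (map (\<lambda>f. f i) fs) = sat M (\<lambda>v. g v i) \<psi>"
    and "P (map (\<lambda>f. the (\<phi> f) i) fs) = sat M (\<lambda>v. the (\<phi> (g v)) i) \<psi>" for i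
    unfolding P_def fs_def using N by (auto intro!: sat_cong)
  ultimately show ?thesis by simp
qed

text \<open>That some \<open>y\<close> realises a given sign pattern on \<open>\<Theta>\<close> is expressed by a single formula,
  which \<open>\<phi>\<close> almost preserves.\<close>
lemma almost_all_types_realised:
  assumes pres: "\<forall>n P. definable M n P \<longrightarrow> almost_preserves n P \<phi>"
    and g: "range g \<subseteq> dom \<phi>" and "finite \<Theta>" and wf: "\<forall>\<theta>\<in>\<Theta>. wf_fm M \<theta>"
  shows "finite {i. \<not> (\<exists>y. \<forall>\<theta>\<in>\<Theta>.
    sat M (case_nat (a i) (\<lambda>t. g t i)) \<theta> = sat M (case_nat y (\<lambda>t. the (\<phi> (g t)) i)) \<theta>)}"
proof -
  obtain \<theta>s where \<theta>s: "set \<theta>s = \<Theta>"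
    using finite_list[OF \<open>finite \<Theta>\<close>] by blast
  define \<psi> where "\<psi> S = Ex 0 (conj_list (map (\<lambda>\<theta>. if \<theta> \<in> S then \<theta> else Neg \<theta>) \<theta>s))" for S
  have sat_\<psi>: "sat M h (\<psi> S) \<longleftrightarrow> (\<exists>y. \<forall>\<theta>\<in>\<Theta>. sat M (case_nat y (\<lambda>t. h (Suc t))) \<theta> \<longleftrightarrow> \<theta> \<in> S)"
    for h S
    unfolding \<psi>_def using \<theta>s by (simp add: sat_conj_list_signs fun_upd_zero_eq_case_nat)
  define bad where "bad S = {i. sat M (\<lambda>v. g (v - 1) i) (\<psi> S) \<noteq> sat M (\<lambda>v. the (\<phi> (g (v - 1))) i) (\<psi> S)}"
    for S
  have "finite (bad S)" for S
    unfolding bad_def using g wf \<theta>s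
    by (intro almost_preserves_sat[OF pres, of "\<lambda>v. g (v - 1)"]) (auto simp: \<psi>_def wf_conj_list)
  then have "finite (\<Union>S\<in>Pow \<Theta>. bad S)"
    using \<open>finite \<Theta>\<close> by blast
  moreover have "\<exists>y. \<forall>\<theta>\<in>\<Theta>.
      sat M (case_nat (a i) (\<lambda>t. g t i)) \<theta> = sat M (case_nat y (\<lambda>t. the (\<phi> (g t)) i)) \<theta>"
    if "i \<notin> (\<Union>S\<in>Pow \<Theta>. bad S)" for i
  proof -
    define S where "S = {\<theta>\<in>\<Theta>. sat M (case_nat (a i) (\<lambda>t. g t i)) \<theta>}"
    have "sat M (\<lambda>v. g (v - 1) i) (\<psi> S)"
      unfolding sat_\<psi> S_def by auto
    then have "sat M (\<lambda>v. the (\<phi> (g (v - 1))) i) (\<psi> S)"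
      using that unfolding bad_def S_def by auto
    then show ?thesis
      unfolding sat_\<psi> S_def by auto
  qed
  ultimately show ?thesis
    by (blast intro: finite_subset)
qed

text \<open>Diagonalisation: at coordinate \<open>i\<close>, satisfy the strongest requirement \<open>Q k\<close> with
  \<open>k \<le> i\<close> that can be met there.\<close>
lemma diagonal_choice:
  fixes Q :: "nat \<Rightarrow> nat \<Rightarrow> 'b \<Rightarrow> bool"
  assumes antimono: "\<And>k k' i y. Q k' i y \<Longrightarrow> k \<le> k' \<Longrightarrow> Q k i y"
    and fin: "\<And>k. finite {i. \<not> (\<exists>y. Q k i y)}"
  shows "\<exists>b. \<forall>k. finite {i. \<not> Q k i (b i)}"
proof -
  define K where "K i = Max {k. k \<le> i \<and> (\<exists>y. Q k i y)}" for i
  define b where "b i = (SOME y. Q (K i) i y)" for i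
  have "{i. \<not> Q k i (b i)} \<subseteq> {..<k} \<union> {i. \<not> (\<exists>y. Q k i y)}" for k
  proof
    fix i assume i: "i \<in> {i. \<not> Q k i (b i)}"
    show "i \<in> {..<k} \<union> {i. \<not> (\<exists>y. Q k i y)}"
    proof (rule ccontr)
      assume "i \<notin> {..<k} \<union> {i. \<not> (\<exists>y. Q k i y)}"
      then have k: "k \<in> {k. k \<le> i \<and> (\<exists>y. Q k i y)}"
        by auto
      have "finite {k. k \<le> i \<and> (\<exists>y. Q k i y)}"
        by (rule finite_subset[of _ "{..i}"]) auto
      with k have "k \<le> K i" and "\<exists>y. Q (K i) i y"
        unfolding K_def using Max_ge Max_in by blast+
      then have "Q k i (b i)"
        unfolding b_def by (metis antimono someI_ex)
      with i show False by simp
    qed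
  qed
  then show ?thesis
    using fin by (meson finite_Un finite_lessThan finite_subset)
qed

lemma ex_realiser_almost_everywhere:
  fixes M :: "('a, 'f::countable, 'r::countable) struct"
  assumes pres: "\<forall>n P. definable M n P \<longrightarrow> almost_preserves n P \<phi>"
    and g: "range g \<subseteq> dom \<phi>"
  shows "\<exists>b. \<forall>\<theta>. wf_fm M \<theta> \<longrightarrow> finite {i.
    sat M (case_nat (a i) (\<lambda>t. g t i)) \<theta> \<noteq> sat M (case_nat (b i) (\<lambda>t. the (\<phi> (g t)) i)) \<theta>}"
proof -
  define agrees where "agrees k i y \<longleftrightarrow> (\<forall>\<theta>\<in>{\<theta>\<in>from_nat ` {..<k}. wf_fm M \<theta>}.
      sat M (case_nat (a i) (\<lambda>t. g t i)) \<theta> = sat M (case_nat y (\<lambda>t. the (\<phi> (g t)) i)) \<theta>)"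
    for k i y
  have "agrees k i y" if "agrees k' i y" "k \<le> k'" for k k' i y
    using that unfolding agrees_def by auto
  moreover have "finite {i. \<not> (\<exists>y. agrees k i y)}" for k
    unfolding agrees_def by (rule almost_all_types_realised[OF pres g]) auto
  ultimately obtain b where b: "\<And>k. finite {i. \<not> agrees k i (b i)}"
    using diagonal_choice[of agrees] by blast
  have "finite {i. sat M (case_nat (a i) (\<lambda>t. g t i)) \<theta> \<noteq> sat M (case_nat (b i) (\<lambda>t. the (\<phi> (g t)) i)) \<theta>}"
    if "wf_fm M \<theta>" for \<theta>
  proof (rule finite_subset[OF _ b[of "Suc (to_nat \<theta>)"]])
    have "\<theta> \<in> {\<theta>\<in>from_nat ` {..<Suc (to_nat \<theta>)}. wf_fm M \<theta>}"
      using that by (metis (mono_tags) from_nat_to_nat image_eqI lessI lessThan_iff mem_Collect_eq)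
    then show "{i. sat M (case_nat (a i) (\<lambda>t. g t i)) \<theta> \<noteq> sat M (case_nat (b i) (\<lambda>t. the (\<phi> (g t)) i)) \<theta>}
        \<subseteq> {i. \<not> agrees (Suc (to_nat \<theta>)) i (b i)}"
      unfolding agrees_def by blast
  qed
  then show ?thesis by blast
qed

lemma almost_preserves_fun_upd:
  assumes surj: "dom \<phi> \<subseteq> range g"
    and agree: "\<And>\<theta>. wf_fm M \<theta> \<Longrightarrow> finite {i.
      sat M (case_nat (a i) (\<lambda>t. g t i)) \<theta> \<noteq> sat M (case_nat (b i) (\<lambda>t. the (\<phi> (g t)) i)) \<theta>}"
    and P: "definable M n P"
  shows "almost_preserves n P (\<phi>(a \<mapsto> b))"
  unfolding almost_preserves_def
proof (intro allI impI)
  fix fs :: "(nat \<Rightarrow> 'a) list"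
  assume fs: "length fs = n \<and> set fs \<subseteq> dom (\<phi>(a \<mapsto> b))"
  define \<sigma> where "\<sigma> l = (if fs ! l = a then 0 else Suc (inv g (fs ! l)))" for l
  obtain \<theta> where \<theta>: "wf_fm M \<theta>" "\<And>e. sat M e \<theta> = P (map (\<lambda>x. e (\<sigma> x)) [0..<n])"
    using definable_renamed[OF P] by blast
  have "case_nat (a i) (\<lambda>t. g t i) (\<sigma> l) = (fs ! l) i"
    and "case_nat (b i) (\<lambda>t. the (\<phi> (g t)) i) (\<sigma> l) = the ((\<phi>(a \<mapsto> b)) (fs ! l)) i"
    if "l < n" for i l
  proof -
    have l: "fs ! l \<in> insert a (dom \<phi>)"
      using fs that nth_mem by fastforce
    then have "g (inv g (fs ! l)) = fs ! l" if "fs ! l \<noteq> a"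
      using surj that by (auto intro: f_inv_into_f)
    with l show "case_nat (a i) (\<lambda>t. g t i) (\<sigma> l) = (fs ! l) i"
      and "case_nat (b i) (\<lambda>t. the (\<phi> (g t)) i) (\<sigma> l) = the ((\<phi>(a \<mapsto> b)) (fs ! l)) i"
      unfolding \<sigma>_def by auto
  qed
  then have "map (\<lambda>f. f i) fs = map (\<lambda>l. case_nat (a i) (\<lambda>t. g t i) (\<sigma> l)) [0..<n]"
    and "map (\<lambda>f. the ((\<phi>(a \<mapsto> b)) f) i) fs = map (\<lambda>l. case_nat (b i) (\<lambda>t. the (\<phi> (g t)) i) (\<sigma> l)) [0..<n]"
    for i using fs by (auto intro: nth_equalityI)
  then show "finite {i. P (map (\<lambda>f. f i) fs) \<noteq> P (map (\<lambda>f. the ((\<phi>(a \<mapsto> b)) f) i) fs)}"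
    using agree[OF \<theta>(1)] by (simp only: \<theta>(2))
qed

lemma almost_preserves_map_upd_self:
  assumes "dom \<phi> = {}"
  shows "almost_preserves n P (\<phi>(a \<mapsto> a))"
  unfolding almost_preserves_def
proof (intro allI impI)
  fix fs :: "(nat \<Rightarrow> 'a) list"
  assume "length fs = n \<and> set fs \<subseteq> dom (\<phi>(a \<mapsto> a))"
  then have "set fs \<subseteq> {a}"
    using assms by auto
  then have "map (\<lambda>f. the ((\<phi>(a \<mapsto> a)) f) i) fs = map (\<lambda>f. f i) fs" for i
    by (induction fs) auto
  then show "finite {i. P (map (\<lambda>f. f i) fs) \<noteq> P (map (\<lambda>f. the ((\<phi>(a \<mapsto> a)) f) i) fs)}"
    by (simp only:) simp
qed

theorem lemma1:
  fixes M :: "('a::countable, 'f::countable, 'r::countable) struct"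
    and \<phi> :: "(nat \<Rightarrow> 'a) \<rightharpoonup> (nat \<Rightarrow> 'a)"
    and a :: "nat \<Rightarrow> 'a"
  assumes "countable (dom \<phi>)"
    and "\<forall>n P. definable M n P \<longrightarrow> almost_preserves n P \<phi>"
    and "a \<notin> dom \<phi>"
  shows "\<exists>b. \<forall>n P. definable M n P \<longrightarrow> almost_preserves n P (\<phi>(a \<mapsto> b))"
proof (cases "dom \<phi> = {}")
  case True
  then show ?thesis
    using almost_preserves_map_upd_self by blast
next
  case False
  define g where "g = from_nat_into (dom \<phi>)"
  have g: "range g = dom \<phi>"
    unfolding g_def using False assms(1) by simp
  obtain b where "\<forall>\<theta>. wf_fm M \<theta> \<longrightarrow> finite {i.
      sat M (case_nat (a i) (\<lambda>t. g t i)) \<theta> \<noteq> sat M (case_nat (b i) (\<lambda>t. the (\<phi> (g t)) i)) \<theta>}"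
    using ex_realiser_almost_everywhere[OF assms(2), of g a] g by blast
  then show ?thesis
    using almost_preserves_fun_upd[of \<phi> g M a b] g by blast
qed

end
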